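(* Let $PW=\{F\in L^2(\mathbb R):\operatorname{supp}\widehat F\subset[-1/2,1/2]\}$ and $E=\{F\in PW:F(x)=F(-x)\text{ for all }x\}$. There exists $c>0$ such that $$\sum_{n\ge0}|F(n)|^2+\sum_{n<0}\Big|\frac{-1}{2\pi i}F'(n)\Big|^2\ge c\,\|F\|_{L^2(\mathbb R)}^2\quad\text{for all }F\in E.$$
   Context: Functions in $PW$ are of the form $F(\xi)=\int_{-1/2}^{1/2}f(x)e^{-2\pi i\xi x}dx$ with $f\in L^2[-1/2,1/2]$, hence differentiable; $n$ ranges over the integers. *)

theory Defs
  imports "HOL-Analysis.Analysis"
begin

definition L2_half :: "(real \<Rightarrow> complex) \<Rightarrow> bool" where
  "L2_half f \<longleftrightarrow> f \<in> borel_measurable lborel \<and>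
     integrable lborel (\<lambda>x. indicator {-1/2..1/2} x * (cmod (f x))\<^sup>2)"

definition PW :: "(real \<Rightarrow> complex) set" where
  "PW = {F. \<exists>f. L2_half f \<and>
     (\<forall>\<xi>. F \<xi> = (LINT x:{-1/2..1/2}|lborel. f x * exp (- 2 * pi * \<i> * complex_of_real (\<xi> * x))))}"

definition PW_even :: "(real \<Rightarrow> complex) set" where
  "PW_even = {F \<in> PW. \<forall>x. F x = F (- x)}"

end

theory Submission
  imports Defs
begin

text \<open>For even \<open>F\<close> the samples \<open>F n\<close> with \<open>n < 0\<close> repeat those with \<open>n > 0\<close>, so the derivative
  terms can be discarded and \<open>c = 1/2\<close> works once \<open>\<integral>|F|\<^sup>2 \<le> \<Sum>\<^sub>n |F n|\<^sup>2\<close> over all \<open>n \<in> \<int>\<close>.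
  With \<open>F\<close> the Fourier transform of \<open>f \<in> L\<^sup>2[-1/2,1/2]\<close> this splits into two inequalities.
  First \<open>\<integral>|F|\<^sup>2 \<le> \<parallel>f\<parallel>\<^sup>2\<close>: the values \<open>F (n + t)\<close> are the Fourier coefficients of
  \<open>f x \<cdot> exp (-2\<pi>i t x)\<close>, so by Bessel's inequality \<open>\<Sum>\<^sub>n |F (n + t)|\<^sup>2 \<le> \<parallel>f\<parallel>\<^sup>2\<close> for every \<open>t\<close>, and
  integrating over \<open>t \<in> [0,1)\<close> covers the line. Second \<open>\<parallel>f\<parallel>\<^sup>2 \<le> \<Sum>\<^sub>n |F n|\<^sup>2\<close>, Parseval's
  inequality, which rests on the density of trigonometric polynomials in \<open>L\<^sup>2[-1/2,1/2]\<close>: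
  continuous functions vanishing near \<open>\<plusminus>1/2\<close> are approximated uniformly by Stone-Weierstrass on
  the unit circle, indicators of half-lines by such functions, all Borel indicators by a
  Dynkin-system argument, and arbitrary \<open>f\<close> by simple functions.\<close>

abbreviation half_ivl :: "real set" where
  "half_ivl \<equiv> {-1/2..1/2}"

definition fourier_basis :: "int \<Rightarrow> real \<Rightarrow> complex" where
  "fourier_basis n x = cis (2 * pi * of_int n * x)"

definition ft_kernel :: "real \<Rightarrow> real \<Rightarrow> complex" where
  "ft_kernel \<xi> x = exp (- 2 * pi * \<i> * complex_of_real (\<xi> * x))"

definition L2_sq :: "(real \<Rightarrow> complex) \<Rightarrow> real" where
  "L2_sq g = (\<integral>x. indicator half_ivl x * (cmod (g x))\<^sup>2 \<partial>lborel)"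

definition L2_inner :: "(real \<Rightarrow> complex) \<Rightarrow> (real \<Rightarrow> complex) \<Rightarrow> complex" where
  "L2_inner g h = (\<integral>x. (indicator half_ivl x :: complex) * (g x * cnj (h x)) \<partial>lborel)"

definition fourier_coeff :: "(real \<Rightarrow> complex) \<Rightarrow> int \<Rightarrow> complex" where
  "fourier_coeff g n = (LINT x:half_ivl|lborel. g x * ft_kernel (of_int n) x)"

lemma ft_kernel_cis: "ft_kernel \<xi> x = cis (- (2 * pi * \<xi> * x))"
  unfolding ft_kernel_def cis_conv_exp by (simp add: algebra_simps)

lemma ft_kernel_of_int: "ft_kernel (of_int n) x = cnj (fourier_basis n x)"
  unfolding ft_kernel_cis fourier_basis_def cis_cnj by (simp add: algebra_simps)

lemma ft_kernel_add: "ft_kernel (a + b) x = ft_kernel b x * ft_kernel a x"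
  unfolding ft_kernel_cis cis_mult by (simp add: algebra_simps)

lemma norm_ft_kernel [simp]: "cmod (ft_kernel \<xi> x) = 1"
  by (simp add: ft_kernel_cis)

lemma fourier_basis_mult: "fourier_basis n x * fourier_basis m x = fourier_basis (n + m) x"
  unfolding fourier_basis_def cis_mult by (simp add: algebra_simps)

lemma cnj_fourier_basis: "cnj (fourier_basis n x) = fourier_basis (- n) x"
  unfolding fourier_basis_def cis_cnj by simp

lemma fourier_basis_0 [simp]: "fourier_basis 0 x = 1"
  by (simp add: fourier_basis_def)

lemma norm_fourier_basis [simp]: "cmod (fourier_basis n x) = 1"
  by (simp add: fourier_basis_def)

lemma borel_measurable_fourier_basis [measurable]: "fourier_basis n \<in> borel_measurable borel"
  unfolding fourier_basis_def by (intro borel_measurable_continuous_onI continuous_intros)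

lemma borel_measurable_ft_kernel [measurable]: "ft_kernel \<xi> \<in> borel_measurable borel"
  unfolding ft_kernel_def by (intro borel_measurable_continuous_onI continuous_intros)

lemma borel_measurable_cnj [measurable]:
  "f \<in> borel_measurable M \<Longrightarrow> (\<lambda>x. cnj (f x)) \<in> borel_measurable M"
  by (rule borel_measurable_continuous_on[where f=cnj]) (auto intro: continuous_intros)

lemma borel_measurable_indicator_half_ivl [measurable]:
  "(\<lambda>x. indicator half_ivl x :: complex) \<in> borel_measurable borel"
  by (intro borel_measurable_indicator) simp

lemma integrable_indicator_half_ivl_const: "integrable lborel (\<lambda>x. indicator half_ivl x * (c::real))"
  by (intro integrable_mult_left integrable_real_indicator) auto

lemma L2_half_bounded:
  assumes "g \<in> borel_measurable borel" "\<And>x. x \<in> half_ivl \<Longrightarrow> cmod (g x) \<le> M"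
  shows "L2_half g"
  unfolding L2_half_def
proof (intro conjI)
  show "g \<in> borel_measurable lborel" using assms by simp
  show "integrable lborel (\<lambda>x. indicator half_ivl x * (cmod (g x))\<^sup>2)"
  proof (rule Bochner_Integration.integrable_bound[OF integrable_indicator_half_ivl_const[of "M\<^sup>2"]])
    show "(\<lambda>x. indicator half_ivl x * (cmod (g x))\<^sup>2) \<in> borel_measurable lborel" using assms by simp
    have "(cmod (g x))\<^sup>2 \<le> M\<^sup>2" if "x \<in> half_ivl" for x
      using assms(2)[OF that] by (simp add: power_mono)
    then show "AE x in lborel. norm (indicator half_ivl x * (cmod (g x))\<^sup>2) \<le> norm (indicator half_ivl x * M\<^sup>2)"
      by (intro AE_I2) (auto simp: indicator_def)
  qed
qed

lemma L2_half_fourier_basis: "L2_half (fourier_basis n)"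
  by (rule L2_half_bounded[where M=1]) auto

lemma L2_half_indicator: "A \<in> sets borel \<Longrightarrow> L2_half (\<lambda>x. indicator A x :: complex)"
  by (rule L2_half_bounded[where M=1]) (auto simp: indicator_def)

lemma L2_half_dominated:
  assumes u: "u \<in> borel_measurable borel" and g: "L2_half g"
    and bound: "\<And>x. cmod (u x) \<le> C * cmod (g x)"
  shows "L2_half u"
  unfolding L2_half_def
proof (intro conjI)
  show "u \<in> borel_measurable lborel" using u by simp
  have "integrable lborel (\<lambda>x. C\<^sup>2 * (indicator half_ivl x * (cmod (g x))\<^sup>2))"
    using g unfolding L2_half_def by auto
  then show "integrable lborel (\<lambda>x. indicator half_ivl x * (cmod (u x))\<^sup>2)"
  proof (rule Bochner_Integration.integrable_bound)
    show "(\<lambda>x. indicator half_ivl x * (cmod (u x))\<^sup>2) \<in> borel_measurable lborel" using u by simp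
    have "(cmod (u x))\<^sup>2 \<le> (C * cmod (g x))\<^sup>2" for x
      using bound[of x] by (intro power_mono) auto
    then show "AE x in lborel. norm (indicator half_ivl x * (cmod (u x))\<^sup>2)
        \<le> norm (C\<^sup>2 * (indicator half_ivl x * (cmod (g x))\<^sup>2))"
      by (intro AE_I2) (auto simp: indicator_def power_mult_distrib)
  qed
qed

lemma norm_add_sq_le: "(cmod (a + b))\<^sup>2 \<le> 2 * (cmod a)\<^sup>2 + 2 * (cmod b)\<^sup>2"
proof -
  have "(cmod (a + b))\<^sup>2 \<le> (cmod a + cmod b)\<^sup>2"
    by (simp add: power_mono norm_triangle_ineq)
  also have "\<dots> \<le> 2 * (cmod a)\<^sup>2 + 2 * (cmod b)\<^sup>2"
    using zero_le_power2[of "cmod a - cmod b"] unfolding power2_sum power2_diff by linarith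
  finally show ?thesis .
qed

lemma L2_half_add:
  assumes "L2_half g" "L2_half h"
  shows "L2_half (\<lambda>x. g x + h x)"
  unfolding L2_half_def
proof (intro conjI)
  have [measurable]: "g \<in> borel_measurable borel" "h \<in> borel_measurable borel"
    using assms by (auto simp: L2_half_def)
  show "(\<lambda>x. g x + h x) \<in> borel_measurable lborel" by simp
  have "integrable lborel (\<lambda>x. 2 * (indicator half_ivl x * (cmod (g x))\<^sup>2)
      + 2 * (indicator half_ivl x * (cmod (h x))\<^sup>2))"
    using assms unfolding L2_half_def by auto
  then show "integrable lborel (\<lambda>x. indicator half_ivl x * (cmod (g x + h x))\<^sup>2)"
    by (rule Bochner_Integration.integrable_bound)
      (use norm_add_sq_le[of "g _" "h _"] in \<open>auto simp: indicator_def\<close>)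
qed

lemma L2_half_scale: "L2_half g \<Longrightarrow> L2_half (\<lambda>x. c * g x)"
  by (rule L2_half_dominated[where C="cmod c"]) (auto simp: L2_half_def norm_mult)

lemma L2_half_diff: "L2_half g \<Longrightarrow> L2_half h \<Longrightarrow> L2_half (\<lambda>x. g x - h x)"
  using L2_half_add[of g "\<lambda>x. (-1) * h x"] L2_half_scale[of h "-1"] by simp

lemma L2_half_sum:
  "finite A \<Longrightarrow> (\<And>i. i \<in> A \<Longrightarrow> L2_half (f i)) \<Longrightarrow> L2_half (\<lambda>x. \<Sum>i\<in>A. f i x)"
proof (induction A rule: finite_induct)
  case empty then show ?case using L2_half_bounded[of "\<lambda>x. 0" 0] by simp
next
  case (insert a A) then show ?case by (simp add: L2_half_add)
qed

lemma L2_sq_nonneg: "L2_sq g \<ge> 0"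
  unfolding L2_sq_def by (intro integral_nonneg_AE) auto

lemma L2_sq_scale: "L2_sq (\<lambda>x. c * g x) = (cmod c)\<^sup>2 * L2_sq g"
  unfolding L2_sq_def by (simp add: norm_mult power_mult_distrib algebra_simps)

lemma L2_sq_add_le:
  assumes "L2_half a" "L2_half b"
  shows "L2_sq (\<lambda>x. a x + b x) \<le> 2 * L2_sq a + 2 * L2_sq b"
proof -
  have ia: "integrable lborel (\<lambda>x. indicator half_ivl x * (cmod (a x))\<^sup>2)"
   and ib: "integrable lborel (\<lambda>x. indicator half_ivl x * (cmod (b x))\<^sup>2)"
   and iab: "integrable lborel (\<lambda>x. indicator half_ivl x * (cmod (a x + b x))\<^sup>2)"
    using assms L2_half_add[OF assms] unfolding L2_half_def by auto
  have "L2_sq (\<lambda>x. a x + b x) \<le> (\<integral>x. 2 * (indicator half_ivl x * (cmod (a x))\<^sup>2)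
      + 2 * (indicator half_ivl x * (cmod (b x))\<^sup>2) \<partial>lborel)"
    unfolding L2_sq_def
    by (rule integral_mono[OF iab]) (use ia ib norm_add_sq_le in \<open>auto simp: indicator_def\<close>)
  also have "\<dots> = 2 * L2_sq a + 2 * L2_sq b" unfolding L2_sq_def using ia ib by simp
  finally show ?thesis .
qed

lemma L2_sq_le_sup_sq:
  assumes "L2_half u" "\<And>x. x \<in> half_ivl \<Longrightarrow> cmod (u x) \<le> M"
  shows "L2_sq u \<le> M\<^sup>2"
proof -
  have "integrable lborel (\<lambda>x. indicator half_ivl x * (cmod (u x))\<^sup>2)"
    using assms(1) unfolding L2_half_def by auto
  then have "L2_sq u \<le> (\<integral>x. indicator half_ivl x * M\<^sup>2 \<partial>lborel)"
    unfolding L2_sq_def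
    by (rule integral_mono[OF _ integrable_indicator_half_ivl_const])
      (use assms(2) in \<open>auto simp: indicator_def power_mono\<close>)
  then show ?thesis by simp
qed

lemma integrable_L2_inner:
  assumes "L2_half g" "L2_half h"
  shows "integrable lborel (\<lambda>x. (indicator half_ivl x :: complex) * (g x * cnj (h x)))"
proof -
  have [measurable]: "g \<in> borel_measurable borel" "h \<in> borel_measurable borel"
    using assms by (auto simp: L2_half_def)
  have int: "integrable lborel (\<lambda>x. indicator half_ivl x * (cmod (g x))\<^sup>2
      + indicator half_ivl x * (cmod (h x))\<^sup>2)"
    using assms unfolding L2_half_def by auto
  show ?thesis
  proof (rule Bochner_Integration.integrable_bound[OF int])
    show "(\<lambda>x. (indicator half_ivl x :: complex) * (g x * cnj (h x))) \<in> borel_measurable lborel"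
      by simp
    have "cmod (g x) * cmod (h x) \<le> (cmod (g x))\<^sup>2 + (cmod (h x))\<^sup>2" for x
    proof -
      have "0 \<le> (cmod (g x) - cmod (h x))\<^sup>2" "0 \<le> cmod (g x) * cmod (h x)" by simp_all
      then show ?thesis unfolding power2_diff by linarith
    qed
    then show "AE x in lborel. norm ((indicator half_ivl x :: complex) * (g x * cnj (h x)))
        \<le> norm (indicator half_ivl x * (cmod (g x))\<^sup>2 + indicator half_ivl x * (cmod (h x))\<^sup>2)"
      by (intro AE_I2) (auto simp: indicator_def norm_mult)
  qed
qed

lemma L2_inner_cnj: "L2_inner h g = cnj (L2_inner g h)"
proof -
  have "cnj (L2_inner g h)
      = (\<integral>x. cnj ((indicator half_ivl x :: complex) * (g x * cnj (h x))) \<partial>lborel)"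
    unfolding L2_inner_def by (rule Bochner_Integration.integral_cnj[symmetric])
  also have "\<dots> = L2_inner h g" unfolding L2_inner_def
    by (intro Bochner_Integration.integral_cong) (auto simp: indicator_def)
  finally show ?thesis by simp
qed

lemma L2_inner_diff_left:
  assumes "L2_half g1" "L2_half g2" "L2_half h"
  shows "L2_inner (\<lambda>x. g1 x - g2 x) h = L2_inner g1 h - L2_inner g2 h"
proof -
  have "L2_inner (\<lambda>x. g1 x - g2 x) h = (\<integral>x. (indicator half_ivl x :: complex) * (g1 x * cnj (h x))
      - (indicator half_ivl x :: complex) * (g2 x * cnj (h x)) \<partial>lborel)"
    unfolding L2_inner_def by (intro Bochner_Integration.integral_cong) (auto simp: algebra_simps)
  also have "\<dots> = L2_inner g1 h - L2_inner g2 h"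
    unfolding L2_inner_def using integrable_L2_inner[OF assms(1,3)] integrable_L2_inner[OF assms(2,3)]
    by simp
  finally show ?thesis .
qed

lemma L2_inner_diff_right:
  assumes "L2_half g1" "L2_half g2" "L2_half h"
  shows "L2_inner h (\<lambda>x. g1 x - g2 x) = L2_inner h g1 - L2_inner h g2"
  by (subst (1 2 3) L2_inner_cnj) (simp add: L2_inner_diff_left[OF assms])

lemma L2_inner_sum_right:
  assumes "L2_half h" "finite A"
  shows "L2_inner h (\<lambda>x. \<Sum>n\<in>A. c n * fourier_basis n x)
    = (\<Sum>n\<in>A. cnj (c n) * L2_inner h (fourier_basis n))"
proof -
  have "L2_inner h (\<lambda>x. \<Sum>n\<in>A. c n * fourier_basis n x)
      = (\<integral>x. (\<Sum>n\<in>A. cnj (c n) * ((indicator half_ivl x :: complex)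
          * (h x * cnj (fourier_basis n x)))) \<partial>lborel)"
    unfolding L2_inner_def
    by (intro Bochner_Integration.integral_cong) (auto simp: sum_distrib_left sum_distrib_right algebra_simps)
  also have "\<dots> = (\<Sum>n\<in>A. (\<integral>x. cnj (c n) * ((indicator half_ivl x :: complex)
      * (h x * cnj (fourier_basis n x))) \<partial>lborel))"
    by (rule Bochner_Integration.integral_sum, rule integrable_mult_right,
        rule integrable_L2_inner[OF assms(1) L2_half_fourier_basis])
  also have "\<dots> = (\<Sum>n\<in>A. cnj (c n) * L2_inner h (fourier_basis n))"
    unfolding L2_inner_def by simp
  finally show ?thesis .
qed

lemma mult_cnj_eq_norm_sq: "z * cnj z = (complex_of_real (cmod z))\<^sup>2"
  using complex_norm_square[of z] by simp

lemma L2_sq_eq_L2_inner: "L2_half g \<Longrightarrow> L2_sq g = Re (L2_inner g g)"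
proof -
  have "L2_inner g g = (\<integral>x. complex_of_real (indicator half_ivl x * (cmod (g x))\<^sup>2) \<partial>lborel)"
    unfolding L2_inner_def
    by (intro Bochner_Integration.integral_cong) (auto simp: indicator_def mult_cnj_eq_norm_sq)
  also have "\<dots> = complex_of_real (L2_sq g)" unfolding L2_sq_def by (rule integral_complex_of_real)
  finally show ?thesis by simp
qed

lemma set_integral_half_ivl_eq:
  "(LINT x:half_ivl|lborel. f x) = (\<integral>x. (indicator half_ivl x :: complex) * f x \<partial>lborel)"
  unfolding set_lebesgue_integral_def
  by (intro Bochner_Integration.integral_cong) (auto simp: indicator_def)

lemma integral_fourier_basis: "(LINT x:half_ivl|lborel. fourier_basis k x) = (if k = 0 then 1 else 0)"
proof (cases "k = 0")
  case True
  then show ?thesis by (simp add: set_integral_const)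
next
  case False
  define c where "c = \<i> * complex_of_real (2 * pi * of_int k)"
  have c0: "c \<noteq> 0" using False by (simp add: c_def)
  define G where "G z = exp (c * z) / c" for z
  have dG: "(G has_field_derivative exp (c * z)) (at z)" for z
    unfolding G_def using c0 by (auto intro!: derivative_eq_intros)
  have eq: "fourier_basis k x = exp (c * complex_of_real x)" for x
    unfolding fourier_basis_def cis_conv_exp c_def by (simp add: algebra_simps)
  have "(LINT x:half_ivl|lborel. fourier_basis k x) = (LBINT x=ereal (-1/2)..ereal (1/2). fourier_basis k x)"
    by (subst interval_integral_Icc) auto
  also have "\<dots> = G (of_real (1/2)) - G (of_real (-1/2))"
  proof (rule interval_integral_FTC_finite)
    show "continuous_on {min (-1/2) (1/2)..max (-1/2) (1/2)} (fourier_basis k)"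
      unfolding fourier_basis_def by (intro continuous_intros)
    show "((\<lambda>x. G (of_real x)) has_vector_derivative fourier_basis k x)
        (at x within {min (-1/2) (1/2)..max (-1/2) (1/2)})" for x
      unfolding eq by (rule has_vector_derivative_real_field[OF dG])
  qed
  also have "\<dots> = 0"
  proof -
    \<comment> \<open>the primitive is \<open>1\<close>-periodic since \<open>k\<close> is an integer\<close>
    have "exp (c * of_real (1/2)) = exp (c * of_real (-1/2)) * exp (c * 1)"
      by (simp flip: exp_add add: algebra_simps)
    moreover have "exp (c * 1) = 1"
      unfolding c_def by (simp add: cis_conv_exp[symmetric] mult.commute)
    ultimately show ?thesis unfolding G_def by simp
  qed
  finally show ?thesis using False by simp
qed

lemma L2_inner_fourier_basis:
  "L2_inner (fourier_basis n) (fourier_basis m) = (if n = m then 1 else 0)"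
proof -
  have "L2_inner (fourier_basis n) (fourier_basis m) = (LINT x:half_ivl|lborel. fourier_basis (n - m) x)"
    unfolding L2_inner_def set_integral_half_ivl_eq cnj_fourier_basis fourier_basis_mult by simp
  also have "\<dots> = (if n - m = 0 then 1 else 0)" by (rule integral_fourier_basis)
  finally show ?thesis by simp
qed

lemma fourier_coeff_eq_L2_inner: "fourier_coeff g n = L2_inner g (fourier_basis n)"
  unfolding fourier_coeff_def L2_inner_def set_integral_half_ivl_eq ft_kernel_of_int
  by (simp add: mult.assoc)

lemma L2_inner_trig_sum:
  assumes "finite A"
  shows "L2_inner (\<lambda>x. \<Sum>n\<in>A. c n * fourier_basis n x) (\<lambda>x. \<Sum>n\<in>A. c n * fourier_basis n x)
    = (\<Sum>n\<in>A. complex_of_real ((cmod (c n))\<^sup>2))"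
proof -
  define p where "p x = (\<Sum>n\<in>A. c n * fourier_basis n x)" for x
  have Lp: "L2_half p"
    unfolding p_def using assms by (intro L2_half_sum L2_half_scale L2_half_fourier_basis)
  have "L2_inner p (fourier_basis m) = c m" if "m \<in> A" for m
  proof -
    have "L2_inner (fourier_basis m) p = (\<Sum>n\<in>A. if n = m then cnj (c n) else 0)"
      unfolding p_def L2_inner_sum_right[OF L2_half_fourier_basis assms]
      by (intro sum.cong) (auto simp: L2_inner_fourier_basis)
    also have "\<dots> = cnj (c m)" using that assms by simp
    finally show ?thesis by (subst L2_inner_cnj) simp
  qed
  then have "L2_inner p p = (\<Sum>n\<in>A. cnj (c n) * c n)"
    by (subst (2) p_def[abs_def]) (simp add: L2_inner_sum_right[OF Lp assms])
  then show ?thesis unfolding p_def by (simp add: mult_cnj_eq_norm_sq mult.commute)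
qed

lemma norm_diff_sq: "(cmod (a - b))\<^sup>2 = (cmod a)\<^sup>2 - 2 * Re (cnj b * a) + (cmod b)\<^sup>2"
  unfolding cmod_power2 by (simp add: power2_eq_square algebra_simps)

lemma L2_sq_diff_trig_sum:
  assumes g: "L2_half g" and A: "finite A"
  shows "L2_sq (\<lambda>x. g x - (\<Sum>n\<in>A. c n * fourier_basis n x))
    = L2_sq g - (\<Sum>n\<in>A. (cmod (fourier_coeff g n))\<^sup>2) + (\<Sum>n\<in>A. (cmod (fourier_coeff g n - c n))\<^sup>2)"
proof -
  define p where "p x = (\<Sum>n\<in>A. c n * fourier_basis n x)" for x
  have Lp: "L2_half p"
    unfolding p_def using A by (intro L2_half_sum L2_half_scale L2_half_fourier_basis)
  have Lgp: "L2_half (\<lambda>x. g x - p x)" by (rule L2_half_diff[OF g Lp])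
  have gp: "L2_inner g p = (\<Sum>n\<in>A. cnj (c n) * fourier_coeff g n)"
    unfolding p_def by (simp add: L2_inner_sum_right[OF g A] fourier_coeff_eq_L2_inner)
  have pp: "L2_inner p p = (\<Sum>n\<in>A. complex_of_real ((cmod (c n))\<^sup>2))"
    unfolding p_def by (rule L2_inner_trig_sum[OF A])
  have "L2_inner (\<lambda>x. g x - p x) (\<lambda>x. g x - p x) = L2_inner g g - L2_inner g p - (L2_inner p g - L2_inner p p)"
    by (simp add: L2_inner_diff_left[OF g Lp Lgp] L2_inner_diff_right[OF g Lp g]
        L2_inner_diff_right[OF g Lp Lp])
  moreover have "Re (L2_inner p g) = Re (L2_inner g p)" by (subst L2_inner_cnj) simp
  ultimately have "L2_sq (\<lambda>x. g x - p x)
      = L2_sq g - 2 * (\<Sum>n\<in>A. Re (cnj (c n) * fourier_coeff g n)) + (\<Sum>n\<in>A. (cmod (c n))\<^sup>2)"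
    using L2_sq_eq_L2_inner[OF Lgp] L2_sq_eq_L2_inner[OF g] gp pp by (simp add: Re_sum)
  also have "\<dots> = L2_sq g - (\<Sum>n\<in>A. (cmod (fourier_coeff g n))\<^sup>2)
      + (\<Sum>n\<in>A. (cmod (fourier_coeff g n - c n))\<^sup>2)"
    unfolding norm_diff_sq by (simp add: sum.distrib sum_subtractf sum_distrib_left)
  finally show ?thesis unfolding p_def .
qed

lemma bessel_inequality:
  assumes "L2_half g" "finite A"
  shows "(\<Sum>n\<in>A. (cmod (fourier_coeff g n))\<^sup>2) \<le> L2_sq g"
  using L2_sq_diff_trig_sum[OF assms, of "fourier_coeff g"]
    L2_sq_nonneg[of "\<lambda>x. g x - (\<Sum>n\<in>A. fourier_coeff g n * fourier_basis n x)"]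
  by simp

inductive trigpoly :: "(real \<Rightarrow> complex) \<Rightarrow> bool" where
  trigpoly_monomial: "trigpoly (\<lambda>x. c * fourier_basis n x)"
| trigpoly_add: "trigpoly f \<Longrightarrow> trigpoly g \<Longrightarrow> trigpoly (\<lambda>x. f x + g x)"

lemma trigpoly_sum_form:
  assumes "trigpoly p"
  obtains A c where "finite A" "p = (\<lambda>x. \<Sum>n\<in>A. c n * fourier_basis n x)"
  using assms
proof (induction arbitrary: thesis rule: trigpoly.induct)
  case (trigpoly_monomial c n)
  show ?case by (rule trigpoly_monomial.prems[of "{n}" "\<lambda>_. c"]) simp_all
next
  case (trigpoly_add f g)
  obtain A a where A: "finite A" "f = (\<lambda>x. \<Sum>n\<in>A. a n * fourier_basis n x)"
    by (rule trigpoly_add.IH(1))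
  obtain B b where B: "finite B" "g = (\<lambda>x. \<Sum>n\<in>B. b n * fourier_basis n x)"
    by (rule trigpoly_add.IH(2))
  define d where "d n = (if n \<in> A then a n else 0) + (if n \<in> B then b n else 0)" for n
  have "f x + g x = (\<Sum>n\<in>A \<union> B. d n * fourier_basis n x)" for x
  proof -
    have "(\<Sum>n\<in>A \<union> B. d n * fourier_basis n x)
        = (\<Sum>n\<in>A \<union> B. (if n \<in> A then a n * fourier_basis n x else 0))
          + (\<Sum>n\<in>A \<union> B. (if n \<in> B then b n * fourier_basis n x else 0))"
      unfolding d_def sum.distrib[symmetric] by (intro sum.cong refl) (auto simp: algebra_simps)
    also have "\<dots> = f x + g x"
      using A B by (simp add: sum.If_cases Int_absorb1 Int_absorb2)
    finally show ?thesis by simp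
  qed
  then show ?case using A B by (intro trigpoly_add.prems[of "A \<union> B" d]) auto
qed

lemma L2_half_trigpoly: "trigpoly p \<Longrightarrow> L2_half p"
  by (induction rule: trigpoly.induct) (auto intro: L2_half_add L2_half_scale L2_half_fourier_basis)

lemma trigpoly_const: "trigpoly (\<lambda>x. c)"
  using trigpoly_monomial[of c 0] by simp

lemma trigpoly_scale: "trigpoly p \<Longrightarrow> trigpoly (\<lambda>x. c * p x)"
proof (induction rule: trigpoly.induct)
  case (trigpoly_monomial d n)
  then show ?case using trigpoly.trigpoly_monomial[of "c * d" n] by (simp add: mult.assoc)
next
  case (trigpoly_add f g)
  then show ?case using trigpoly.trigpoly_add[of "\<lambda>x. c * f x" "\<lambda>x. c * g x"] by (simp add: distrib_left)
qed

lemma trigpoly_mult_monomial: "trigpoly q \<Longrightarrow> trigpoly (\<lambda>x. c * fourier_basis n x * q x)"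
proof (induction rule: trigpoly.induct)
  case (trigpoly_monomial d m)
  have "(\<lambda>x. c * fourier_basis n x * (d * fourier_basis m x)) = (\<lambda>x. (c * d) * fourier_basis (n + m) x)"
    by (simp add: fun_eq_iff fourier_basis_mult[symmetric] algebra_simps)
  then show ?case using trigpoly.trigpoly_monomial[of "c * d" "n + m"] by simp
next
  case (trigpoly_add f g)
  then show ?case
    using trigpoly.trigpoly_add[of "\<lambda>x. c * fourier_basis n x * f x" "\<lambda>x. c * fourier_basis n x * g x"]
    by (simp add: distrib_left)
qed

lemma trigpoly_mult: "trigpoly p \<Longrightarrow> trigpoly q \<Longrightarrow> trigpoly (\<lambda>x. p x * q x)"
proof (induction rule: trigpoly.induct)
  case (trigpoly_monomial c n) then show ?case by (rule trigpoly_mult_monomial)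
next
  case (trigpoly_add f g)
  then show ?case using trigpoly.trigpoly_add[of "\<lambda>x. f x * q x" "\<lambda>x. g x * q x"] by (simp add: distrib_right)
qed

definition trig_approximable :: "(real \<Rightarrow> complex) \<Rightarrow> bool" where
  "trig_approximable g \<longleftrightarrow> (\<forall>e>0. \<exists>p. trigpoly p \<and> L2_sq (\<lambda>x. g x - p x) < e)"

lemma trig_approximable_trigpoly: "trigpoly p \<Longrightarrow> trig_approximable p"
  unfolding trig_approximable_def L2_sq_def by auto

lemma trig_approximable_approx:
  assumes g: "L2_half g"
    and approx: "\<And>e. e > 0 \<Longrightarrow> \<exists>h. L2_half h \<and> trig_approximable h \<and> L2_sq (\<lambda>x. g x - h x) < e"
  shows "trig_approximable g"
  unfolding trig_approximable_def
proof (intro allI impI)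
  fix e :: real assume e: "e > 0"
  obtain h where h: "L2_half h" "trig_approximable h" "L2_sq (\<lambda>x. g x - h x) < e / 4"
    using approx[of "e/4"] e by auto
  obtain p where p: "trigpoly p" "L2_sq (\<lambda>x. h x - p x) < e / 4"
    using h(2) e unfolding trig_approximable_def by (meson zero_less_divide_iff zero_less_numeral)
  have "L2_sq (\<lambda>x. g x - p x) = L2_sq (\<lambda>x. (g x - h x) + (h x - p x))" by simp
  also have "\<dots> \<le> 2 * L2_sq (\<lambda>x. g x - h x) + 2 * L2_sq (\<lambda>x. h x - p x)"
    by (rule L2_sq_add_le) (auto intro: L2_half_diff g h L2_half_trigpoly p)
  also have "\<dots> < e" using h p by simp
  finally show "\<exists>p. trigpoly p \<and> L2_sq (\<lambda>x. g x - p x) < e" using p by blast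
qed

lemma trig_approximable_limit:
  assumes g: "L2_half g" and s: "\<And>k. L2_half (s k) \<and> trig_approximable (s k)"
    and lim: "(\<lambda>k. L2_sq (\<lambda>x. g x - s k x)) \<longlonglongrightarrow> 0"
  shows "trig_approximable g"
proof (rule trig_approximable_approx[OF g])
  fix e :: real assume "e > 0"
  then have "eventually (\<lambda>k. L2_sq (\<lambda>x. g x - s k x) < e) sequentially"
    using lim by (rule order_tendstoD(2)[rotated])
  then obtain k where "L2_sq (\<lambda>x. g x - s k x) < e"
    by (meson eventually_sequentially order.refl)
  then show "\<exists>h. L2_half h \<and> trig_approximable h \<and> L2_sq (\<lambda>x. g x - h x) < e" using s by blast
qed

lemma trig_approximable_add:
  assumes "L2_half g1" "L2_half g2" "trig_approximable g1" "trig_approximable g2"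
  shows "trig_approximable (\<lambda>x. g1 x + g2 x)"
  unfolding trig_approximable_def
proof (intro allI impI)
  fix e :: real assume e: "e > 0"
  obtain p1 where p1: "trigpoly p1" "L2_sq (\<lambda>x. g1 x - p1 x) < e / 4"
    using assms(3) e unfolding trig_approximable_def by (meson zero_less_divide_iff zero_less_numeral)
  obtain p2 where p2: "trigpoly p2" "L2_sq (\<lambda>x. g2 x - p2 x) < e / 4"
    using assms(4) e unfolding trig_approximable_def by (meson zero_less_divide_iff zero_less_numeral)
  have "L2_sq (\<lambda>x. (g1 x + g2 x) - (p1 x + p2 x)) = L2_sq (\<lambda>x. (g1 x - p1 x) + (g2 x - p2 x))"
    by (simp add: algebra_simps)
  also have "\<dots> \<le> 2 * L2_sq (\<lambda>x. g1 x - p1 x) + 2 * L2_sq (\<lambda>x. g2 x - p2 x)"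
    by (rule L2_sq_add_le) (auto intro: L2_half_diff assms L2_half_trigpoly p1 p2)
  also have "\<dots> < e" using p1 p2 by simp
  finally show "\<exists>p. trigpoly p \<and> L2_sq (\<lambda>x. (g1 x + g2 x) - p x) < e"
    using p1 p2 trigpoly_add by blast
qed

lemma trig_approximable_scale:
  assumes "trig_approximable g"
  shows "trig_approximable (\<lambda>x. c * g x)"
  unfolding trig_approximable_def
proof (intro allI impI)
  fix e :: real assume e: "e > 0"
  show "\<exists>p. trigpoly p \<and> L2_sq (\<lambda>x. c * g x - p x) < e"
  proof (cases "c = 0")
    case True
    then show ?thesis using e trigpoly_const[of 0] by (auto simp: L2_sq_def)
  next
    case False
    then have c: "(cmod c)\<^sup>2 > 0" by simp
    obtain p where p: "trigpoly p" "L2_sq (\<lambda>x. g x - p x) < e / (cmod c)\<^sup>2"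
      using assms e c unfolding trig_approximable_def by (meson divide_pos_pos)
    have "L2_sq (\<lambda>x. c * g x - c * p x) = (cmod c)\<^sup>2 * L2_sq (\<lambda>x. g x - p x)"
      using L2_sq_scale[of c "\<lambda>x. g x - p x"] by (simp add: algebra_simps)
    also have "\<dots> < e" using p c by (simp add: field_simps)
    finally show ?thesis using p trigpoly_scale by blast
  qed
qed

lemma trig_approximable_sum:
  "finite A \<Longrightarrow> (\<And>i. i \<in> A \<Longrightarrow> L2_half (f i) \<and> trig_approximable (f i))
    \<Longrightarrow> trig_approximable (\<lambda>x. \<Sum>i\<in>A. f i x)"
proof (induction A rule: finite_induct)
  case empty then show ?case using trig_approximable_trigpoly[OF trigpoly_const[of 0]] by simp
next
  case (insert a A)
  then show ?case by (simp, intro trig_approximable_add L2_half_sum) auto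
qed

inductive conj_poly :: "(complex \<Rightarrow> complex) \<Rightarrow> bool" where
  conj_poly_const: "conj_poly (\<lambda>z. c)"
| conj_poly_id: "conj_poly (\<lambda>z. z)"
| conj_poly_cnj_id: "conj_poly (\<lambda>z. cnj z)"
| conj_poly_add: "conj_poly f \<Longrightarrow> conj_poly g \<Longrightarrow> conj_poly (\<lambda>z. f z + g z)"
| conj_poly_mult: "conj_poly f \<Longrightarrow> conj_poly g \<Longrightarrow> conj_poly (\<lambda>z. f z * g z)"

lemma conj_poly_cnj: "conj_poly q \<Longrightarrow> conj_poly (\<lambda>z. cnj (q z))"
  by (induction rule: conj_poly.induct) (auto intro: conj_poly.intros)

lemma continuous_on_conj_poly: "conj_poly q \<Longrightarrow> continuous_on S q"
  by (induction rule: conj_poly.induct) (auto intro!: continuous_intros)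

lemma trigpoly_conj_poly_cis: "conj_poly q \<Longrightarrow> trigpoly (\<lambda>x. q (cis (2 * pi * x)))"
proof (induction rule: conj_poly.induct)
  case (conj_poly_const c) then show ?case by (rule trigpoly_const)
next
  case conj_poly_id
  then show ?case using trigpoly_monomial[of 1 1] by (simp add: fourier_basis_def)
next
  case conj_poly_cnj_id
  then show ?case using trigpoly_monomial[of 1 "-1"] by (simp add: fourier_basis_def cis_cnj)
next
  case (conj_poly_add f g) show ?case by (rule trigpoly_add[OF conj_poly_add.IH])
next
  case (conj_poly_mult f g) show ?case by (rule trigpoly_mult[OF conj_poly_mult.IH])
qed

lemma conj_poly_approx_real:
  fixes H :: "complex \<Rightarrow> real"
  assumes "compact S" "continuous_on S H" "e > 0"
  obtains q where "conj_poly q" "\<And>z. z \<in> S \<Longrightarrow> \<bar>H z - Re (q z)\<bar> < e"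
proof -
  let ?R = "\<lambda>f. \<exists>q. conj_poly q \<and> f = (\<lambda>z. Re (q z))"
  have "\<exists>g. ?R g \<and> (\<forall>x\<in>S. \<bar>H x - g x\<bar> < e)"
  proof (rule Stone_Weierstrass_HOL[of S])
    show "?R (\<lambda>x. c)" for c :: real
      by (intro exI[of _ "\<lambda>z. complex_of_real c"]) (auto intro: conj_poly_const)
    show "continuous_on S f" if "?R f" for f
      using that by (auto intro!: continuous_intros continuous_on_conj_poly)
    show "?R (\<lambda>x. f x + g x)" if "?R f \<and> ?R g" for f g
    proof -
      from that obtain q1 q2 where "conj_poly q1" "f = (\<lambda>z. Re (q1 z))"
          "conj_poly q2" "g = (\<lambda>z. Re (q2 z))" by blast
      then show ?thesis by (intro exI[of _ "\<lambda>z. q1 z + q2 z"]) (auto intro: conj_poly_add)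
    qed
    show "?R (\<lambda>x. f x * g x)" if "?R f \<and> ?R g" for f g
    proof -
      from that obtain q1 q2 where q: "conj_poly q1" "f = (\<lambda>z. Re (q1 z))"
          "conj_poly q2" "g = (\<lambda>z. Re (q2 z))" by blast
      \<comment> \<open>\<open>Re a * Re b = Re (a * Re b)\<close> and \<open>Re b = (b + cnj b) / 2\<close>\<close>
      have "conj_poly (\<lambda>z. q1 z * ((\<lambda>z. complex_of_real (1/2)) z * (q2 z + cnj (q2 z))))"
        by (intro conj_poly_mult conj_poly_add conj_poly_const conj_poly_cnj q)
      moreover have "(\<lambda>x. f x * g x) = (\<lambda>z. Re (q1 z * (complex_of_real (1/2) * (q2 z + cnj (q2 z)))))"
        using q by (auto simp: fun_eq_iff complex_add_cnj)
      ultimately show ?thesis by auto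
    qed
    show "\<exists>f. ?R f \<and> f x \<noteq> f y" if "x \<in> S \<and> y \<in> S \<and> x \<noteq> y" for x y
    proof (cases "Re x = Re y")
      case False
      then show ?thesis by (intro exI[of _ "\<lambda>z. Re z"]) (auto intro!: exI[of _ "\<lambda>z. z"] conj_poly_id)
    next
      case True
      then have "Im x \<noteq> Im y" using that complex_eqI by blast
      moreover have "conj_poly (\<lambda>z. (\<lambda>z. - \<i>) z * z)" by (intro conj_poly_mult conj_poly_const conj_poly_id)
      ultimately show ?thesis by (intro exI[of _ "\<lambda>z. Re (- \<i> * z)"]) auto
    qed
  qed (use assms in auto)
  then show ?thesis using that by blast
qed

lemma Arg_div_2pi_in_half_ivl: "Arg z / (2 * pi) \<in> half_ivl"
  using mpi_less_Arg[of z] Arg_le_pi[of z] by (auto simp: field_simps)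

lemma Arg_lift_vanishes_near_minus_one:
  assumes d: "0 < d" "d \<le> 1/4"
    and vanish: "\<And>x. x \<in> half_ivl \<Longrightarrow> 1/2 - d \<le> \<bar>x\<bar> \<Longrightarrow> h x = 0"
    and z: "cmod z = 1" "Re z + 1 \<le> 1 - cos (2 * pi * d)"
  shows "h (Arg z / (2 * pi)) = 0"
proof (rule ccontr)
  assume "h (Arg z / (2 * pi)) \<noteq> 0"
  then have "\<bar>Arg z / (2 * pi)\<bar> < 1/2 - d"
    using vanish[OF Arg_div_2pi_in_half_ivl] by force
  then have "\<bar>Arg z\<bar> < pi - 2 * pi * d"
    by (simp add: abs_divide field_simps)
  then have "cos (pi - 2 * pi * d) < cos \<bar>Arg z\<bar>"
    by (intro cos_monotone_0_pi) (use d in auto)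
  moreover have "z \<noteq> 0" using z(1) by auto
  then have "Re z = cos (Arg z)" by (simp add: cos_Arg z(1))
  ultimately show False using z(2) by simp
qed

lemma continuous_on_Arg_lift:
  fixes h :: "real \<Rightarrow> 'a::real_normed_vector"
  assumes cont: "continuous_on half_ivl h" and d: "0 < d" "d \<le> 1/4"
    and vanish: "\<And>x. x \<in> half_ivl \<Longrightarrow> 1/2 - d \<le> \<bar>x\<bar> \<Longrightarrow> h x = 0"
  shows "continuous_on (sphere 0 1) (\<lambda>z. h (Arg z / (2 * pi)))"
proof (unfold continuous_on_eq_continuous_within, intro ballI)
  fix z :: complex assume z: "z \<in> sphere 0 1"
  show "continuous (at z within sphere 0 1) (\<lambda>z. h (Arg z / (2 * pi)))"
  proof (cases "z \<in> \<real>\<^sub>\<le>\<^sub>0")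
    case False
    have "continuous (at z within sphere 0 1) (\<lambda>z. Arg z / (2 * pi))"
      by (intro continuous_intros continuous_within_Arg False) simp
    moreover have "continuous (at (Arg z / (2 * pi)) within half_ivl) h"
      using cont Arg_div_2pi_in_half_ivl continuous_on_eq_continuous_within by blast
    then have "continuous (at (Arg z / (2 * pi)) within (\<lambda>z. Arg z / (2 * pi)) ` sphere 0 1) h"
      by (rule continuous_within_subset) (use Arg_div_2pi_in_half_ivl in auto)
    ultimately show ?thesis by (rule continuous_within_compose2)
  next
    case True
    \<comment> \<open>at \<open>z = -1\<close>, where \<open>Arg\<close> jumps, the function vanishes on a neighbourhood\<close>
    then have "z = -1" using z by (auto elim!: nonpos_Reals_cases)
    define r where "r = 1 - cos (2 * pi * d)"
    have "cos (2 * pi * d) < cos 0" by (rule cos_monotone_0_pi) (use d in auto)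
    then have r: "r > 0" by (simp add: r_def)
    have near: "h (Arg w / (2 * pi)) = 0" if "w \<in> sphere 0 1" "dist w z < r" for w
    proof (rule Arg_lift_vanishes_near_minus_one[OF d vanish])
      have "Re w + 1 \<le> cmod (w + 1)"
        by (metis abs_ge_self complex_Re_le_cmod order_trans plus_complex.sel(1) one_complex.sel(1))
      then show "Re w + 1 \<le> 1 - cos (2 * pi * d)"
        using that \<open>z = -1\<close> by (simp add: dist_norm r_def)
    qed (use that in auto)
    have hz: "h (Arg z / (2 * pi)) = 0" using near[OF z] r by simp
    show ?thesis
    proof (rule continuous_within_eps_delta[THEN iffD2], intro allI impI)
      fix \<epsilon> :: real assume "\<epsilon> > 0"
      then show "\<exists>r>0. \<forall>w\<in>sphere 0 1. dist w z < r
          \<longrightarrow> dist (h (Arg w / (2 * pi))) (h (Arg z / (2 * pi))) < \<epsilon>"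
        using r near hz by (intro exI[of _ r]) auto
    qed
  qed
qed

lemma Arg_lift_cis:
  assumes d: "0 < d" "d \<le> 1/4"
    and vanish: "\<And>x. x \<in> half_ivl \<Longrightarrow> 1/2 - d \<le> \<bar>x\<bar> \<Longrightarrow> h x = 0"
    and x: "x \<in> half_ivl"
  shows "h (Arg (cis (2 * pi * x)) / (2 * pi)) = h x"
proof (cases "x = -1/2")
  case True
  have "cis (2 * pi * x) = -1" using True by (simp add: complex_eq_iff)
  moreover have "Arg (-1) = pi" by (simp add: Arg_eq_pi)
  ultimately have "h (Arg (cis (2 * pi * x)) / (2 * pi)) = h (1/2)" by simp
  also have "\<dots> = 0" by (rule vanish) (use d in auto)
  also have "\<dots> = h x" using True by (intro vanish[symmetric]) (use d in auto)
  finally show ?thesis .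
next
  case False
  then have "-1 < 2 * x" "2 * x \<le> 1" using x by auto
  then have "2 * pi * x \<in> {-pi<..pi}"
    using mult_strict_left_mono[of "-1" "2 * x" pi] mult_left_mono[of "2 * x" 1 pi]
    by (auto simp: algebra_simps)
  then show ?thesis by (simp add: Arg_cis)
qed

lemma trigpoly_uniform_approx:
  fixes h :: "real \<Rightarrow> real"
  assumes cont: "continuous_on half_ivl h" and d: "d > 0"
    and vanish: "\<And>x. x \<in> half_ivl \<Longrightarrow> 1/2 - d \<le> \<bar>x\<bar> \<Longrightarrow> h x = 0"
    and e: "e > 0"
  obtains p where "trigpoly p" "\<And>x. x \<in> half_ivl \<Longrightarrow> cmod (complex_of_real (h x) - p x) < e"
proof -
  define \<delta> where "\<delta> = min d (1/4)"
  have \<delta>: "0 < \<delta>" "\<delta> \<le> 1/4" using d by (auto simp: \<delta>_def)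
  have vanish': "h x = 0" if "x \<in> half_ivl" "1/2 - \<delta> \<le> \<bar>x\<bar>" for x
    using vanish[OF that(1)] that(2) by (auto simp: \<delta>_def)
  obtain q where q: "conj_poly q" "\<And>z. z \<in> sphere 0 1 \<Longrightarrow> \<bar>h (Arg z / (2 * pi)) - Re (q z)\<bar> < e"
    using conj_poly_approx_real[OF compact_sphere continuous_on_Arg_lift[OF cont \<delta> vanish'] e]
    by blast
  define p where "p x = complex_of_real (Re (q (cis (2 * pi * x))))" for x
  have "p = (\<lambda>x. (1/2) * (q (cis (2 * pi * x)) + cnj (q (cis (2 * pi * x)))))"
    by (auto simp: fun_eq_iff p_def complex_add_cnj)
  moreover have "trigpoly (\<lambda>x. (1/2) * (q (cis (2 * pi * x)) + cnj (q (cis (2 * pi * x)))))"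
    by (intro trigpoly_scale trigpoly_add trigpoly_conj_poly_cis conj_poly_cnj q)
  ultimately have "trigpoly p" by simp
  moreover have "cmod (complex_of_real (h x) - p x) < e" if x: "x \<in> half_ivl" for x
    using q(2)[of "cis (2 * pi * x)"] Arg_lift_cis[of \<delta> h, OF \<delta> vanish' x]
    by (simp add: p_def flip: of_real_diff)
  ultimately show ?thesis using that by blast
qed

lemma trig_approximable_continuous_vanishing:
  fixes h :: "real \<Rightarrow> real"
  assumes cont: "continuous_on UNIV h" and d: "d > 0"
    and vanish: "\<And>x. x \<in> half_ivl \<Longrightarrow> 1/2 - d \<le> \<bar>x\<bar> \<Longrightarrow> h x = 0"
  shows "trig_approximable (\<lambda>x. complex_of_real (h x))"
  unfolding trig_approximable_def
proof (intro allI impI)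
  fix e :: real assume e: "e > 0"
  have cont': "continuous_on half_ivl h" using cont by (rule continuous_on_subset) simp
  obtain p where p: "trigpoly p" "\<And>x. x \<in> half_ivl \<Longrightarrow> cmod (complex_of_real (h x) - p x) < sqrt (e/2)"
    using trigpoly_uniform_approx[OF cont' d vanish, of "sqrt (e/2)"] e by auto
  obtain M where "\<forall>x\<in>half_ivl. norm (h x) \<le> M"
    using compact_Icc compact_imp_bounded compact_continuous_image[OF cont']
    by (metis bounded_iff image_eqI)
  then have "L2_half (\<lambda>x. complex_of_real (h x))"
    using borel_measurable_continuous_onI[OF cont] by (intro L2_half_bounded[where M=M]) auto
  then have "L2_half (\<lambda>x. complex_of_real (h x) - p x)"
    by (rule L2_half_diff[OF _ L2_half_trigpoly[OF p(1)]])
  then have "L2_sq (\<lambda>x. complex_of_real (h x) - p x) \<le> (sqrt (e/2))\<^sup>2"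
    by (rule L2_sq_le_sup_sq) (use p(2) in \<open>auto intro: less_imp_le\<close>)
  also have "\<dots> < e" using e by simp
  finally show "\<exists>p. trigpoly p \<and> L2_sq (\<lambda>x. complex_of_real (h x) - p x) < e" using p(1) by blast
qed

text \<open>\<open>trapezoid a d\<close> rises from \<open>0\<close> to \<open>1\<close> on \<open>[-1/2 + d, -1/2 + 2d]\<close> and falls back on
  \<open>[a - 2d, a - d]\<close>, approximating the indicator of \<open>[-1/2, a]\<close>.\<close>
definition trapezoid :: "real \<Rightarrow> real \<Rightarrow> real \<Rightarrow> real" where
  "trapezoid a d x = max 0 (min 1 (min ((x + 1/2) / d - 1) ((a - x) / d - 1)))"

lemma continuous_on_trapezoid: "d \<noteq> 0 \<Longrightarrow> continuous_on UNIV (trapezoid a d)"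
  unfolding trapezoid_def by (intro continuous_intros) auto

lemma indicator_atMost_trapezoid_error:
  assumes d: "d > 0"
  shows "indicator half_ivl x * (cmod ((indicator {..a} x :: complex) - complex_of_real (trapezoid a d x)))\<^sup>2
     \<le> indicator {-1/2..-1/2 + 2*d} x + indicator {a - 2*d..a} x"
proof -
  have t01: "0 \<le> trapezoid a d x" "trapezoid a d x \<le> 1" unfolding trapezoid_def by auto
  consider "x \<notin> half_ivl" | "x \<in> half_ivl" "a < x"
    | "x \<in> half_ivl" "x \<le> a" "-1/2 + 2*d \<le> x \<and> x \<le> a - 2*d"
    | "x \<in> half_ivl" "x \<le> a" "\<not> (-1/2 + 2*d \<le> x \<and> x \<le> a - 2*d)"
    by linarith
  then show ?thesis
  proof cases
    case 2
    then have "(a - x) / d - 1 < 0" using d by (simp add: divide_neg_pos)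
    then have "trapezoid a d x = 0" unfolding trapezoid_def by linarith
    then show ?thesis using 2 by (simp add: indicator_def)
  next
    case 3
    then have "(x + 1/2) / d \<ge> 2" "(a - x) / d \<ge> 2" using d by (auto simp: field_simps)
    then have "trapezoid a d x = 1" unfolding trapezoid_def by linarith
    then show ?thesis using 3 by (simp add: indicator_def)
  next
    case 4
    have "(indicator {..a} x :: complex) - complex_of_real (trapezoid a d x)
        = complex_of_real (1 - trapezoid a d x)"
      using 4 by simp
    then have "(cmod ((indicator {..a} x :: complex) - complex_of_real (trapezoid a d x)))\<^sup>2
        = \<bar>1 - trapezoid a d x\<bar>\<^sup>2"
      by (simp only: norm_of_real)
    also have "\<dots> \<le> 1" using t01 by (simp add: abs_square_le_1)
    also have "\<dots> \<le> indicator {-1/2..-1/2 + 2*d} x + indicator {a - 2*d..a} x"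
      using 4 by (auto simp: indicator_def)
    finally show ?thesis using 4 by simp
  qed simp
qed

lemma L2_half_trapezoid: "d > 0 \<Longrightarrow> L2_half (\<lambda>x. complex_of_real (trapezoid a d x))"
  using continuous_on_trapezoid[of d a]
  by (intro L2_half_bounded[where M=1] borel_measurable_continuous_onI)
    (auto simp: trapezoid_def continuous_on_of_real)

lemma trig_approximable_trapezoid:
  assumes d: "d > 0" and a: "a \<le> 1/2"
  shows "trig_approximable (\<lambda>x. complex_of_real (trapezoid a d x))"
proof (rule trig_approximable_continuous_vanishing[OF continuous_on_trapezoid d])
  fix x assume "x \<in> half_ivl" "1/2 - d \<le> \<bar>x\<bar>"
  then have "(x + 1/2) / d - 1 \<le> 0 \<or> (a - x) / d - 1 \<le> 0"
    using d a by (cases "x \<le> 0") (auto simp: field_simps)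
  then show "trapezoid a d x = 0" unfolding trapezoid_def by linarith
qed (use d in simp)

lemma L2_sq_indicator_atMost_minus_trapezoid:
  assumes d: "d > 0"
  shows "L2_sq (\<lambda>x. (indicator {..a} x :: complex) - complex_of_real (trapezoid a d x)) \<le> 4 * d"
proof -
  have "L2_half (\<lambda>x. (indicator {..a} x :: complex) - complex_of_real (trapezoid a d x))"
    by (intro L2_half_diff L2_half_indicator L2_half_trapezoid d) simp
  moreover have i: "integrable lborel
      (\<lambda>x. indicator {-1/2..-1/2 + 2*d} x + indicator {a - 2*d..a} x :: real)"
    by (intro Bochner_Integration.integrable_add integrable_real_indicator)
      (auto simp: emeasure_lborel_Icc_eq)
  ultimately have "L2_sq (\<lambda>x. (indicator {..a} x :: complex) - complex_of_real (trapezoid a d x))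
      \<le> (\<integral>x. indicator {-1/2..-1/2 + 2*d} x + indicator {a - 2*d..a} x \<partial>lborel)"
    unfolding L2_sq_def
    by (intro integral_mono[OF _ i indicator_atMost_trapezoid_error[OF d]]) (simp add: L2_half_def)
  also have "\<dots> = 4 * d"
    using d by (subst Bochner_Integration.integral_add) (auto simp: emeasure_lborel_Icc_eq)
  finally show ?thesis .
qed

lemma trig_approximable_indicator_atMost: "trig_approximable (\<lambda>x. indicator {..a} x :: complex)"
proof (cases "a \<le> 1/2")
  case False
  then have "L2_sq (\<lambda>x. (indicator {..a} x :: complex) - 1) = 0"
    unfolding L2_sq_def by (intro integral_eq_zero_AE AE_I2) (auto simp: indicator_def)
  then show ?thesis unfolding trig_approximable_def using trigpoly_const[of 1] by auto
next
  case True
  show ?thesis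
  proof (rule trig_approximable_approx[OF L2_half_indicator])
    fix e :: real assume "e > 0"
    then have "e / 8 > 0" "4 * (e / 8) < e" by simp_all
    then show "\<exists>h. L2_half h \<and> trig_approximable h \<and> L2_sq (\<lambda>x. (indicator {..a} x :: complex) - h x) < e"
      using L2_half_trapezoid trig_approximable_trapezoid[OF _ True]
        L2_sq_indicator_atMost_minus_trapezoid by (meson le_less_trans)
  qed simp
qed

lemma integral_tendsto_0_dominated:
  fixes s :: "nat \<Rightarrow> real \<Rightarrow> real"
  assumes "\<And>i. s i \<in> borel_measurable lborel" "integrable lborel w"
    "AE x in lborel. (\<lambda>i. s i x) \<longlonglongrightarrow> 0" "\<And>i. AE x in lborel. norm (s i x) \<le> w x"
  shows "(\<lambda>i. integral\<^sup>L lborel (s i)) \<longlonglongrightarrow> 0"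
  using integral_dominated_convergence[of "\<lambda>x. 0::real" lborel s w] assms by simp

lemma L2_sq_indicator_UN_tendsto:
  assumes A: "\<And>i. A i \<in> sets borel"
  shows "(\<lambda>k. L2_sq (\<lambda>x. (indicator (\<Union>i. A i) x :: complex) - indicator (\<Union>i<k. A i) x)) \<longlonglongrightarrow> 0"
  unfolding L2_sq_def
proof (rule integral_tendsto_0_dominated)
  show "(\<lambda>x. indicator half_ivl x * (cmod ((indicator (\<Union>i. A i) x :: complex)
      - indicator (\<Union>i<k. A i) x))\<^sup>2) \<in> borel_measurable lborel" for k
    using A by measurable
  show "integrable lborel (indicator half_ivl :: real \<Rightarrow> real)"
    by (intro integrable_real_indicator) auto
  have "(\<lambda>k. indicator half_ivl x * (cmod ((indicator (\<Union>i. A i) x :: complex) - indicator (\<Union>i<k. A i) x))\<^sup>2)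
      \<longlonglongrightarrow> indicator half_ivl x * (cmod ((indicator (\<Union>i. A i) x :: complex) - indicator (\<Union>i. A i) x))\<^sup>2"
    for x by (intro tendsto_intros LIMSEQ_indicator_UN)
  then show "AE x in lborel. (\<lambda>k. indicator half_ivl x * (cmod ((indicator (\<Union>i. A i) x :: complex)
      - indicator (\<Union>i<k. A i) x))\<^sup>2) \<longlonglongrightarrow> 0"
    by simp
  show "AE x in lborel. norm (indicator half_ivl x * (cmod ((indicator (\<Union>i. A i) x :: complex)
      - indicator (\<Union>i<k. A i) x))\<^sup>2) \<le> indicator half_ivl x" for k
    by (intro AE_I2) (auto simp: indicator_def)
qed

lemma trig_approximable_indicator:
  assumes "A \<in> sets borel"
  shows "trig_approximable (\<lambda>x. indicator A x :: complex)"
proof -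
  have sets_borel: "sets (borel :: real measure) = sigma_sets UNIV (range (\<lambda>a. {..a::real}))"
    by (subst borel_eq_atMost) (rule sets_measure_of, simp)
  have "Int_stable (range (\<lambda>a. {..a::real}))"
    unfolding Int_stable_def by (auto simp: Int_atMost)
  moreover have "range (\<lambda>a. {..a::real}) \<subseteq> Pow UNIV" by simp
  moreover have "A \<in> sigma_sets UNIV (range (\<lambda>a. {..a::real}))" using assms sets_borel by simp
  ultimately show ?thesis
  proof (induction rule: sigma_sets_induct_disjoint)
    case (basic A) then show ?case using trig_approximable_indicator_atMost by auto
  next
    case empty then show ?case using trig_approximable_trigpoly[OF trigpoly_const[of 0]] by simp
  next
    case (compl A)
    then have "A \<in> sets borel" using sets_borel by simp
    moreover have "L2_half (\<lambda>x. 1)" by (rule L2_half_bounded[where M=1]) auto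
    ultimately have "trig_approximable (\<lambda>x. 1 + (- 1) * (indicator A x :: complex))"
      by (intro trig_approximable_add trig_approximable_scale[OF compl.IH]
          trig_approximable_trigpoly[OF trigpoly_const] L2_half_scale L2_half_indicator)
    moreover have "(\<lambda>x. 1 + (- 1) * (indicator A x :: complex)) = (\<lambda>x. indicator (UNIV - A) x)"
      by (auto simp: fun_eq_iff indicator_def)
    ultimately show ?case by simp
  next
    case (union A)
    then have A: "\<And>i. A i \<in> sets borel" using sets_borel by auto
    show ?case
    proof (rule trig_approximable_limit[OF L2_half_indicator _ L2_sq_indicator_UN_tendsto[OF A]])
      show "(\<Union>i. A i) \<in> sets borel" using A by auto
      fix k
      have "(\<lambda>x. indicator (\<Union>i<k. A i) x :: complex) = (\<lambda>x. \<Sum>i\<in>{..<k}. indicator (A i) x)"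
        using union.hyps(1)
        by (auto simp: fun_eq_iff intro!: indicator_UN_disjoint disjoint_family_on_mono[of "{..<k}" UNIV])
      then show "L2_half (\<lambda>x. indicator (\<Union>i<k. A i) x :: complex)
          \<and> trig_approximable (\<lambda>x. indicator (\<Union>i<k. A i) x :: complex)"
        using A union.IH by (auto intro!: trig_approximable_sum L2_half_sum L2_half_indicator)
    qed
  qed
qed

lemma trig_approximable_simple_function:
  fixes s :: "real \<Rightarrow> complex"
  assumes s: "simple_function lborel s"
  shows "trig_approximable s"
proof -
  have "s x = (\<Sum>y \<in> s ` UNIV. y * indicator (s -` {y}) x)" for x
  proof -
    have "s x = (\<Sum>y \<in> s ` space lborel. indicator (s -` {y} \<inter> space lborel) x *\<^sub>R y)"
      by (rule simple_function_indicator_representation_banach[OF s]) simp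
    also have "\<dots> = (\<Sum>y \<in> s ` UNIV. y * indicator (s -` {y}) x)"
      by (intro sum.cong) (auto simp: indicator_def)
    finally show ?thesis .
  qed
  then have eq: "s = (\<lambda>x. \<Sum>y \<in> s ` UNIV. y * indicator (s -` {y}) x)" by (rule ext)
  have fin: "finite (s ` UNIV)" using simple_functionD(1)[OF s] by simp
  have meas: "s -` {y} \<in> sets borel" for y
    using simple_functionD(2)[OF s, of "{y}"] by simp
  show ?thesis
    by (subst eq, intro trig_approximable_sum fin conjI L2_half_scale L2_half_indicator meas
        trig_approximable_scale trig_approximable_indicator)
qed

lemma L2_sq_tendsto_0_dominated:
  assumes g: "L2_half g" and [measurable]: "\<And>k. s k \<in> borel_measurable borel"
    and lim: "\<And>x. (\<lambda>k. s k x) \<longlonglongrightarrow> g x" and bound: "\<And>k x. cmod (s k x) \<le> 2 * cmod (g x)"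
  shows "(\<lambda>k. L2_sq (\<lambda>x. g x - s k x)) \<longlonglongrightarrow> 0"
  unfolding L2_sq_def
proof (rule integral_tendsto_0_dominated)
  have [measurable]: "g \<in> borel_measurable lborel" using g unfolding L2_half_def by simp
  show "(\<lambda>x. indicator half_ivl x * (cmod (g x - s k x))\<^sup>2) \<in> borel_measurable lborel" for k
    by measurable
  show "integrable lborel (\<lambda>x. 9 * (indicator half_ivl x * (cmod (g x))\<^sup>2))"
    using g unfolding L2_half_def by auto
  have "(\<lambda>k. indicator half_ivl x * (cmod (g x - s k x))\<^sup>2)
      \<longlonglongrightarrow> indicator half_ivl x * (cmod (g x - g x))\<^sup>2" for x
    by (intro tendsto_intros lim)
  then show "AE x in lborel. (\<lambda>k. indicator half_ivl x * (cmod (g x - s k x))\<^sup>2) \<longlonglongrightarrow> 0"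
    by simp
  have "(cmod (g x - s k x))\<^sup>2 \<le> 9 * (cmod (g x))\<^sup>2" for k x
  proof -
    have "cmod (g x - s k x) \<le> 3 * cmod (g x)"
      using norm_triangle_ineq4[of "g x" "s k x"] bound[of k x] by simp
    then have "(cmod (g x - s k x))\<^sup>2 \<le> (3 * cmod (g x))\<^sup>2" by (intro power_mono) auto
    then show ?thesis by (simp add: power_mult_distrib)
  qed
  then show "AE x in lborel. norm (indicator half_ivl x * (cmod (g x - s k x))\<^sup>2)
      \<le> 9 * (indicator half_ivl x * (cmod (g x))\<^sup>2)" for k
    by (intro AE_I2) (auto simp: indicator_def)
qed

lemma trig_approximable_L2_half:
  assumes g: "L2_half g"
  shows "trig_approximable g"
proof -
  have "g \<in> borel_measurable lborel" using g unfolding L2_half_def by simp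
  then obtain s where s: "\<And>i. simple_function lborel (s i)" "\<And>x. (\<lambda>i. s i x) \<longlonglongrightarrow> g x"
      "\<And>i x. cmod (s i x) \<le> 2 * cmod (g x)"
    using borel_measurable_implies_sequence_metric[of g lborel 0] by (auto simp: dist_norm)
  have [measurable]: "s i \<in> borel_measurable borel" for i
    using borel_measurable_simple_function[OF s(1)] by simp
  show ?thesis
  proof (rule trig_approximable_limit[OF g _ L2_sq_tendsto_0_dominated[OF g _ s(2,3)]])
    show "L2_half (s k) \<and> trig_approximable (s k)" for k
      using s(3) trig_approximable_simple_function[OF s(1)]
      by (auto intro!: L2_half_dominated[OF _ g, where C=2])
  qed simp
qed

lemma parseval_inequality:
  assumes g: "L2_half g"
  shows "ennreal (L2_sq g) \<le> (\<Sum>\<^sub>\<infinity>n\<in>UNIV. ennreal ((cmod (fourier_coeff g n))\<^sup>2))"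
proof (rule ennreal_le_epsilon)
  fix e :: real assume e: "e > 0"
  obtain p where p: "trigpoly p" "L2_sq (\<lambda>x. g x - p x) < e"
    using trig_approximable_L2_half[OF g] e unfolding trig_approximable_def by blast
  obtain A c where A: "finite A" "p = (\<lambda>x. \<Sum>n\<in>A. c n * fourier_basis n x)"
    using trigpoly_sum_form[OF p(1)] by blast
  \<comment> \<open>the partial sums of the Fourier series are the best approximations\<close>
  have "L2_sq g - (\<Sum>n\<in>A. (cmod (fourier_coeff g n))\<^sup>2) \<le> L2_sq (\<lambda>x. g x - p x)"
    unfolding A(2) L2_sq_diff_trig_sum[OF g A(1)] by (simp add: sum_nonneg)
  then have "ennreal (L2_sq g) \<le> ennreal ((\<Sum>n\<in>A. (cmod (fourier_coeff g n))\<^sup>2) + e)"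
    using p(2) by (intro ennreal_leI) linarith
  also have "\<dots> = ennreal (\<Sum>n\<in>A. (cmod (fourier_coeff g n))\<^sup>2) + ennreal e"
    using e by (intro ennreal_plus sum_nonneg) auto
  also have "ennreal (\<Sum>n\<in>A. (cmod (fourier_coeff g n))\<^sup>2)
      = (\<Sum>\<^sub>\<infinity>n\<in>A. ennreal ((cmod (fourier_coeff g n))\<^sup>2))"
    using A(1) by (simp add: infsum_finite)
  also have "\<dots> \<le> (\<Sum>\<^sub>\<infinity>n\<in>UNIV. ennreal ((cmod (fourier_coeff g n))\<^sup>2))"
    by (rule infsum_mono_neutral) (auto intro: nonneg_summable_on_complete)
  finally show "ennreal (L2_sq g) \<le> (\<Sum>\<^sub>\<infinity>n\<in>UNIV. ennreal ((cmod (fourier_coeff g n))\<^sup>2)) + ennreal e"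
    by (simp add: add_right_mono)
qed

lemma borel_measurable_ft_kernel_pair:
  "(\<lambda>p. ft_kernel (fst p) (snd p)) \<in> borel_measurable (borel \<Otimes>\<^sub>M lborel)"
proof -
  have "sets (borel \<Otimes>\<^sub>M lborel) = sets (borel \<Otimes>\<^sub>M (borel :: real measure))"
    by (rule sets_pair_measure_cong) simp_all
  also have "\<dots> = sets (borel :: (real \<times> real) measure)" by (simp only: borel_prod)
  finally have eq: "sets (borel \<Otimes>\<^sub>M lborel) = sets (borel :: (real \<times> real) measure)" .
  have "(\<lambda>p::real \<times> real. ft_kernel (fst p) (snd p)) \<in> borel_measurable borel"
    unfolding ft_kernel_def by (intro borel_measurable_continuous_onI continuous_intros)
  then show ?thesis by (simp only: measurable_cong_sets[OF eq refl])
qed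

lemma borel_measurable_fourier_transform:
  assumes f: "L2_half f"
  shows "(\<lambda>\<xi>. LINT x:half_ivl|lborel. f x * ft_kernel \<xi> x) \<in> borel_measurable borel"
proof -
  have [measurable]: "f \<in> borel_measurable lborel" using f by (simp add: L2_half_def)
  have "(\<lambda>p. indicator half_ivl (snd p) *\<^sub>R (f (snd p) * ft_kernel (fst p) (snd p)))
      \<in> borel_measurable (borel \<Otimes>\<^sub>M lborel)"
    by (intro borel_measurable_scaleR borel_measurable_times borel_measurable_ft_kernel_pair
        measurable_compose[OF measurable_snd]) simp_all
  then have "(\<lambda>\<xi>. \<integral>x. indicator half_ivl x *\<^sub>R (f x * ft_kernel \<xi> x) \<partial>lborel) \<in> borel_measurable borel"
    by (intro lborel.borel_measurable_lebesgue_integral) (simp add: case_prod_beta')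
  then show ?thesis by (simp add: set_lebesgue_integral_def)
qed

lemma indicator_Ico_eq_sum_unit_Ico:
  fixes K :: nat
  shows "(indicator {- real K..<real K} \<xi> :: ennreal)
    = (\<Sum>n\<in>{- int K..<int K}. indicator {real_of_int n..<real_of_int n + 1} \<xi>)"
proof -
  have "{- real K..<real K} = (\<Union>n\<in>{- int K..<int K}. {real_of_int n..<real_of_int n + 1})"
  proof (intro equalityI subsetI)
    fix x assume x: "x \<in> {- real K..<real K}"
    then have "- int K \<le> \<lfloor>x\<rfloor>" "\<lfloor>x\<rfloor> < int K" by (simp_all add: le_floor_iff floor_less_iff)
    then show "x \<in> (\<Union>n\<in>{- int K..<int K}. {real_of_int n..<real_of_int n + 1})"
      by (intro UN_I[of "\<lfloor>x\<rfloor>"]) auto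
  next
    fix x assume "x \<in> (\<Union>n\<in>{- int K..<int K}. {real_of_int n..<real_of_int n + 1})"
    then obtain n where "- int K \<le> n" "n < int K" "real_of_int n \<le> x" "x < real_of_int n + 1" by auto
    then show "x \<in> {- real K..<real K}" by auto
  qed
  moreover have "disjoint_family_on (\<lambda>n. {real_of_int n..<real_of_int n + 1}) {- int K..<int K}"
    unfolding disjoint_family_on_def
  proof (intro ballI impI equals0I)
    fix m n :: int and x assume "m \<noteq> n" "x \<in> {real_of_int m..<real_of_int m + 1} \<inter> {real_of_int n..<real_of_int n + 1}"
    then show False by auto
  qed
  ultimately show ?thesis by (simp add: indicator_UN_disjoint)
qed

lemma nn_integral_window_le_periodized_bound:
  fixes \<phi> :: "real \<Rightarrow> ennreal" and K :: nat
  assumes [measurable]: "\<phi> \<in> borel_measurable borel"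
    and bound: "\<And>t A. finite A \<Longrightarrow> (\<Sum>n\<in>A. \<phi> (real_of_int n + t)) \<le> C"
  shows "(\<integral>\<^sup>+\<xi>. indicator {- real K..<real K} \<xi> * \<phi> \<xi> \<partial>lborel) \<le> C"
proof -
  let ?A = "{- int K..<int K}"
  have "(\<integral>\<^sup>+\<xi>. indicator {- real K..<real K} \<xi> * \<phi> \<xi> \<partial>lborel)
      = (\<integral>\<^sup>+\<xi>. (\<Sum>n\<in>?A. indicator {real_of_int n..<real_of_int n + 1} \<xi> * \<phi> \<xi>) \<partial>lborel)"
    by (simp only: indicator_Ico_eq_sum_unit_Ico sum_distrib_right)
  also have "\<dots> = (\<Sum>n\<in>?A. (\<integral>\<^sup>+\<xi>. indicator {real_of_int n..<real_of_int n + 1} \<xi> * \<phi> \<xi> \<partial>lborel))"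
    by (rule nn_integral_sum) simp
  also have "\<dots> = (\<Sum>n\<in>?A. (\<integral>\<^sup>+t. indicator {0..<1} t * \<phi> (real_of_int n + t) \<partial>lborel))"
  proof (rule sum.cong[OF refl])
    fix n
    have "(\<integral>\<^sup>+\<xi>. indicator {real_of_int n..<real_of_int n + 1} \<xi> * \<phi> \<xi> \<partial>lborel)
        = ennreal \<bar>1::real\<bar> * (\<integral>\<^sup>+t. indicator {real_of_int n..<real_of_int n + 1} (real_of_int n + 1 * t)
            * \<phi> (real_of_int n + 1 * t) \<partial>lborel)"
      by (rule nn_integral_real_affine) simp_all
    also have "\<dots> = (\<integral>\<^sup>+t. indicator {0..<1} t * \<phi> (real_of_int n + t) \<partial>lborel)"
      by (simp only: abs_one ennreal_1 mult_1_left) (intro nn_integral_cong, auto simp: indicator_def)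
    finally show "(\<integral>\<^sup>+\<xi>. indicator {real_of_int n..<real_of_int n + 1} \<xi> * \<phi> \<xi> \<partial>lborel)
        = (\<integral>\<^sup>+t. indicator {0..<1} t * \<phi> (real_of_int n + t) \<partial>lborel)" .
  qed
  also have "\<dots> = (\<integral>\<^sup>+t. indicator {0..<1} t * (\<Sum>n\<in>?A. \<phi> (real_of_int n + t)) \<partial>lborel)"
    by (subst nn_integral_sum[symmetric]) (simp_all add: sum_distrib_left)
  also have "\<dots> \<le> (\<integral>\<^sup>+t. indicator {0..<1::real} t * C \<partial>lborel)"
    by (intro nn_integral_mono mult_left_mono bound) simp_all
  also have "\<dots> = C"
    by (subst mult.commute) (simp add: nn_integral_cmult_indicator)
  finally show ?thesis .
qed

lemma nn_integral_le_periodized_bound: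
  fixes \<phi> :: "real \<Rightarrow> ennreal"
  assumes [measurable]: "\<phi> \<in> borel_measurable borel"
    and bound: "\<And>t A. finite A \<Longrightarrow> (\<Sum>n\<in>A. \<phi> (real_of_int n + t)) \<le> C"
  shows "(\<integral>\<^sup>+\<xi>. \<phi> \<xi> \<partial>lborel) \<le> C"
proof -
  have "\<phi> \<xi> = (SUP K. indicator {- real K..<real K} \<xi> * \<phi> \<xi>)" for \<xi>
  proof (rule antisym)
    obtain K :: nat where "\<bar>\<xi>\<bar> < real K" using reals_Archimedean2 by blast
    then have "\<phi> \<xi> = indicator {- real K..<real K} \<xi> * \<phi> \<xi>" by (auto simp: indicator_def)
    also have "\<dots> \<le> (SUP K. indicator {- real K..<real K} \<xi> * \<phi> \<xi>)" by (rule SUP_upper) simp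
    finally show "\<phi> \<xi> \<le> (SUP K. indicator {- real K..<real K} \<xi> * \<phi> \<xi>)" .
    show "(SUP K. indicator {- real K..<real K} \<xi> * \<phi> \<xi>) \<le> \<phi> \<xi>"
      by (rule SUP_least) (auto simp: indicator_def)
  qed
  then have "(\<integral>\<^sup>+\<xi>. \<phi> \<xi> \<partial>lborel) = (\<integral>\<^sup>+\<xi>. (SUP K. indicator {- real K..<real K} \<xi> * \<phi> \<xi>) \<partial>lborel)"
    by simp
  also have "\<dots> = (SUP K. (\<integral>\<^sup>+\<xi>. indicator {- real K..<real K} \<xi> * \<phi> \<xi> \<partial>lborel))"
    by (rule nn_integral_monotone_convergence_SUP)
      (auto intro!: incseq_SucI le_funI mult_right_mono simp: indicator_def)
  also have "\<dots> \<le> C"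
    by (intro SUP_least nn_integral_window_le_periodized_bound) (simp_all add: bound)
  finally show ?thesis .
qed

lemma plancherel_inequality:
  assumes f: "L2_half f"
  shows "(\<integral>\<^sup>+\<xi>. ennreal ((cmod (LINT x:half_ivl|lborel. f x * ft_kernel \<xi> x))\<^sup>2) \<partial>lborel)
    \<le> ennreal (L2_sq f)"
proof (rule nn_integral_le_periodized_bound)
  show "(\<lambda>\<xi>. ennreal ((cmod (LINT x:half_ivl|lborel. f x * ft_kernel \<xi> x))\<^sup>2)) \<in> borel_measurable borel"
    using borel_measurable_fourier_transform[OF f] by measurable
  fix t :: real and A :: "int set" assume A: "finite A"
  define g where "g x = f x * ft_kernel t x" for x
  have "L2_half g"
    using f unfolding g_def by (intro L2_half_dominated[OF _ f, where C=1]) (auto simp: L2_half_def norm_mult)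
  moreover have "L2_sq g = L2_sq f" unfolding L2_sq_def g_def by (simp add: norm_mult)
  \<comment> \<open>the transform at \<open>n + t\<close> is the \<open>n\<close>-th Fourier coefficient of the modulated \<open>f\<close>\<close>
  moreover have "(LINT x:half_ivl|lborel. f x * ft_kernel (real_of_int n + t) x) = fourier_coeff g n" for n
    unfolding fourier_coeff_def g_def by (simp add: ft_kernel_add mult.assoc)
  ultimately show "(\<Sum>n\<in>A. ennreal ((cmod (LINT x:half_ivl|lborel. f x * ft_kernel (real_of_int n + t) x))\<^sup>2))
      \<le> ennreal (L2_sq f)"
    using bessel_inequality[of g A] A by (simp add: ennreal_leI)
qed

lemma infsum_int_le_twice_nonneg:
  fixes a :: "int \<Rightarrow> ennreal"
  assumes even: "\<And>n. a (- n) = a n"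
  shows "(\<Sum>\<^sub>\<infinity>n\<in>UNIV. a n) \<le> 2 * (\<Sum>\<^sub>\<infinity>n\<in>{n. n \<ge> 0}. a n)"
proof -
  have U: "(UNIV :: int set) = {n. n \<ge> 0} \<union> uminus ` {n. n > 0}"
    by (auto intro!: image_eqI[of _ uminus "- _"])
  have "(\<Sum>\<^sub>\<infinity>n\<in>UNIV. a n) = (\<Sum>\<^sub>\<infinity>n\<in>{n. n \<ge> 0}. a n) + (\<Sum>\<^sub>\<infinity>n\<in>uminus ` {n. n > 0}. a n)"
    by (subst U, rule infsum_Un_disjoint) (auto intro: nonneg_summable_on_complete)
  also have "(\<Sum>\<^sub>\<infinity>n\<in>uminus ` {n::int. n > 0}. a n) = (\<Sum>\<^sub>\<infinity>n\<in>{n::int. n > 0}. a n)"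
    by (subst infsum_reindex) (simp_all add: inj_on_def comp_def even)
  also have "\<dots> \<le> (\<Sum>\<^sub>\<infinity>n\<in>{n. n \<ge> 0}. a n)"
    by (rule infsum_mono_neutral) (auto intro: nonneg_summable_on_complete)
  finally show ?thesis by (simp add: mult_2 add_left_mono)
qed

lemma ennreal_half_mult_le:
  assumes "x \<le> 2 * y"
  shows "ennreal (1/2) * x \<le> y"
proof -
  have "ennreal (1/2) * x \<le> ennreal (1/2) * (2 * y)" using assms by (rule mult_left_mono) simp
  also have "\<dots> = ennreal (1/2) * ennreal 2 * y" by (simp add: mult.assoc)
  also have "\<dots> = y" by (subst ennreal_mult[symmetric]) simp_all
  finally show ?thesis .
qed

theorem mainTheorem10:
  shows "\<exists>c::real. c > 0 \<and> (\<forall>F \<in> PW_even.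
    (\<Sum>\<^sub>\<infinity>n\<in>{n::int. n \<ge> 0}. ennreal ((cmod (F (of_int n)))\<^sup>2))
    + (\<Sum>\<^sub>\<infinity>n\<in>{n::int. n < 0}.
         ennreal ((cmod ((-1 / (2 * pi * \<i>)) * vector_derivative F (at (of_int n))))\<^sup>2))
    \<ge> ennreal c * (\<integral>\<^sup>+ x. ennreal ((cmod (F x))\<^sup>2) \<partial>lborel))"
proof (intro exI[of _ "1/2"] conjI ballI)
  fix F assume F: "F \<in> PW_even"
  then obtain f where f: "L2_half f"
    and F_eq: "\<And>\<xi>. F \<xi> = (LINT x:half_ivl|lborel. f x * ft_kernel \<xi> x)"
    unfolding PW_even_def PW_def ft_kernel_def by blast
  have even: "F (- x) = F x" for x using F unfolding PW_even_def by simp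
  have "(\<integral>\<^sup>+ x. ennreal ((cmod (F x))\<^sup>2) \<partial>lborel) \<le> ennreal (L2_sq f)"
    unfolding F_eq by (rule plancherel_inequality[OF f])
  also have "\<dots> \<le> (\<Sum>\<^sub>\<infinity>n\<in>UNIV. ennreal ((cmod (fourier_coeff f n))\<^sup>2))"
    by (rule parseval_inequality[OF f])
  also have "\<dots> \<le> 2 * (\<Sum>\<^sub>\<infinity>n\<in>{n::int. n \<ge> 0}. ennreal ((cmod (F (of_int n)))\<^sup>2))"
    unfolding fourier_coeff_def F_eq[symmetric] by (rule infsum_int_le_twice_nonneg) (simp add: even)
  finally show "ennreal (1/2) * (\<integral>\<^sup>+ x. ennreal ((cmod (F x))\<^sup>2) \<partial>lborel)
      \<le> (\<Sum>\<^sub>\<infinity>n\<in>{n::int. n \<ge> 0}. ennreal ((cmod (F (of_int n)))\<^sup>2))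
        + (\<Sum>\<^sub>\<infinity>n\<in>{n::int. n < 0}.
            ennreal ((cmod ((-1 / (2 * pi * \<i>)) * vector_derivative F (at (of_int n))))\<^sup>2))"
    by (intro order_trans[OF ennreal_half_mult_le] add_increasing2) auto
qed simp

end
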